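(* Let $\{z_n\}_{n\ge 0}$ be a sequence of positive real numbers satisfying $$(\alpha_1n+\alpha_0)z_{n+1}=(\beta_1n+\beta_0)z_n-(\gamma_1n+\gamma_0)z_{n-1}\quad (n\ge 1),$$ where $\alpha_1n+\alpha_0$, $\beta_1n+\beta_0$, $\gamma_1n+\gamma_0$ are positive for all $n\ge 1$. Put $A=\beta_0\gamma_1-\beta_1\gamma_0$, $B=\gamma_0\alpha_1-\gamma_1\alpha_0$, $C=\alpha_0\beta_1-\alpha_1\beta_0$. Suppose $z_0z_2\le z_1^2$. Then $\{z_n\}_{n\ge 0}$ is log-concave if one of the following holds: (i) $B\le 0$ and $C\le 0$; (ii) $B<0$, $C>0$, $AC\le B^2$ and $z_0B+z_1C\le 0$; (iii) $B>0$, $C<0$, $AC\ge B^2$ and $z_0B+z_1C\le 0$.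
   Context: A sequence $a_0,a_1,\ldots$ of nonnegative real numbers is log-concave if $a_{k-1}a_{k+1}\le a_k^2$ for all $k\ge 1$. *)

theory Defs
  imports Complex_Main
begin

definition log_concave :: "(nat \<Rightarrow> real) \<Rightarrow> bool" where
  "log_concave a \<longleftrightarrow> (\<forall>k. a k \<ge> 0) \<and> (\<forall>k\<ge>1. a (k - 1) * a (k + 1) \<le> (a k)\<^sup>2)"

end

theory Submission
  imports Defs
begin

text \<open>Write \<open>a n = \<alpha>1 n + \<alpha>0\<close>, \<open>b n = \<beta>1 n + \<beta>0\<close>, \<open>c n = \<gamma>1 n + \<gamma>0\<close> and
  \<open>q n = z (n + 1) / z n\<close>. Log-concavity says that \<open>q\<close> is decreasing, and the recurrence reads
  \<open>a (n + 1) q (n + 1) = b (n + 1) - c (n + 1) / q n\<close>. Since \<open>a n b (n + 1) - b n a (n + 1) = C\<close>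
  and \<open>c n a (n + 1) - a n c (n + 1) = B\<close>, comparing two consecutive instances of the recurrence
  shows that \<open>q (n + 1) \<le> q n\<close> together with \<open>B + C q n \<le> 0\<close> forces \<open>q (n + 2) \<le> q (n + 1)\<close>.
  It therefore suffices that \<open>B + C q n \<le> 0\<close> along the sequence: in case (i) this is automatic;
  in case (ii) it follows from \<open>q n \<le> q 0\<close>; in case (iii) it says \<open>q n \<ge> t = -B/C\<close>, and
  \<open>x \<mapsto> (b - c/x)/a\<close> maps \<open>[t, \<infinity>)\<close> into itself because
  \<open>C\<^sup>2 (a t\<^sup>2 - b t + c) = a (B\<^sup>2 - A C) \<le> 0\<close>.\<close>

lemma log_concave_step_iff_ratio_le:
  fixes z :: "nat \<Rightarrow> real"
  assumes pos: "\<And>n. z n > 0"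
  shows "z n * z (Suc (Suc n)) \<le> (z (Suc n))\<^sup>2
    \<longleftrightarrow> z (Suc (Suc n)) / z (Suc n) \<le> z (Suc n) / z n"
  using pos[of n] pos[of "Suc n"]
  by (simp add: divide_le_eq le_divide_eq power2_eq_square mult.commute)

lemma log_concave_iff_decseq_ratio:
  fixes z :: "nat \<Rightarrow> real"
  assumes pos: "\<And>n. z n > 0"
  shows "log_concave z \<longleftrightarrow> decseq (\<lambda>n. z (Suc n) / z n)"
proof -
  have shift: "(\<forall>k\<ge>1. P k) \<longleftrightarrow> (\<forall>n. P (Suc n))" for P :: "nat \<Rightarrow> bool"
    by (metis One_nat_def Suc_le_D le_add1 plus_1_eq_Suc)
  have "log_concave z \<longleftrightarrow> (\<forall>n. z n * z (Suc (Suc n)) \<le> (z (Suc n))\<^sup>2)"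
    using pos less_imp_le unfolding log_concave_def shift by auto
  also have "\<dots> \<longleftrightarrow> decseq (\<lambda>n. z (Suc n) / z n)"
    by (simp add: decseq_Suc_iff log_concave_step_iff_ratio_le[of z, OF pos])
  finally show ?thesis .
qed

locale linear_three_term_recurrence =
  fixes z :: "nat \<Rightarrow> real"
    and \<alpha>1 \<alpha>0 \<beta>1 \<beta>0 \<gamma>1 \<gamma>0 :: real
  assumes pos: "\<And>n. z n > 0"
    and rec: "\<And>n. n \<ge> 1 \<Longrightarrow>
      (\<alpha>1 * real n + \<alpha>0) * z (n + 1) = (\<beta>1 * real n + \<beta>0) * z n - (\<gamma>1 * real n + \<gamma>0) * z (n - 1)"
    and apos: "\<And>n. n \<ge> 1 \<Longrightarrow> \<alpha>1 * real n + \<alpha>0 > 0"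
    and cpos: "\<And>n. n \<ge> 1 \<Longrightarrow> \<gamma>1 * real n + \<gamma>0 > 0"
begin

definition a :: "nat \<Rightarrow> real" where "a n = \<alpha>1 * real n + \<alpha>0"
definition b :: "nat \<Rightarrow> real" where "b n = \<beta>1 * real n + \<beta>0"
definition c :: "nat \<Rightarrow> real" where "c n = \<gamma>1 * real n + \<gamma>0"

text \<open>\<open>(A, B, C)\<close> is the cross product of \<open>(\<alpha>0, \<beta>0, \<gamma>0)\<close> and \<open>(\<alpha>1, \<beta>1, \<gamma>1)\<close>, hence also of any
  two consecutive coefficient vectors \<open>(a n, b n, c n)\<close>.\<close>

definition A :: real where "A = \<beta>0 * \<gamma>1 - \<beta>1 * \<gamma>0"
definition B :: real where "B = \<gamma>0 * \<alpha>1 - \<gamma>1 * \<alpha>0"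
definition C :: real where "C = \<alpha>0 * \<beta>1 - \<alpha>1 * \<beta>0"

definition ratio :: "nat \<Rightarrow> real" where "ratio n = z (Suc n) / z n"

lemma consecutive_cross_C: "a n * b (Suc n) - b n * a (Suc n) = C"
  by (simp add: a_def b_def C_def algebra_simps)

lemma consecutive_cross_B: "c n * a (Suc n) - a n * c (Suc n) = B"
  by (simp add: a_def c_def B_def algebra_simps)

lemma coeffs_orthogonal_cross: "a n * A + b n * B + c n * C = 0"
  by (simp add: a_def b_def c_def A_def B_def C_def algebra_simps)

lemma a_Suc_pos: "a (Suc n) > 0"
  using apos[of "Suc n"] by (simp add: a_def)

lemma c_Suc_pos: "c (Suc n) > 0"
  using cpos[of "Suc n"] by (simp add: c_def)

lemma ratio_pos: "ratio n > 0"
  using pos by (simp add: ratio_def)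

lemma ratio_rec: "a (Suc n) * ratio (Suc n) = b (Suc n) - c (Suc n) / ratio n"
proof -
  have "a (Suc n) * z (Suc (Suc n)) = b (Suc n) * z (Suc n) - c (Suc n) * z n"
    using rec[of "Suc n"] by (simp add: a_def b_def c_def)
  then show ?thesis
    using pos[of n] pos[of "Suc n"] by (simp add: ratio_def field_simps)
qed

lemma ratio_step_decreasing:
  assumes dec: "ratio (Suc n) \<le> ratio n" and sign: "B + C * ratio n \<le> 0"
  shows "ratio (Suc (Suc n)) \<le> ratio (Suc n)"
proof -
  let ?x = "ratio (Suc n)" and ?y = "ratio n"
  have "c (Suc (Suc n)) / ?y \<le> c (Suc (Suc n)) / ?x"
    using dec ratio_pos c_Suc_pos by (simp add: frac_le less_imp_le)
  then have "a (Suc (Suc n)) * ratio (Suc (Suc n)) \<le> b (Suc (Suc n)) - c (Suc (Suc n)) / ?y"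
    using ratio_rec[of "Suc n"] by simp
  then have "a (Suc n) * (a (Suc (Suc n)) * ratio (Suc (Suc n)))
      \<le> a (Suc n) * (b (Suc (Suc n)) - c (Suc (Suc n)) / ?y)"
    using a_Suc_pos by (simp add: mult_left_mono less_imp_le)
  also have "\<dots> = a (Suc (Suc n)) * (b (Suc n) - c (Suc n) / ?y) + (B + C * ?y) / ?y"
    using consecutive_cross_C[of "Suc n"] consecutive_cross_B[of "Suc n"] ratio_pos[of n]
    by (simp add: field_simps)
  also have "\<dots> \<le> a (Suc (Suc n)) * (b (Suc n) - c (Suc n) / ?y)"
    using sign ratio_pos[of n] by (simp add: divide_nonpos_pos)
  also have "\<dots> = a (Suc n) * (a (Suc (Suc n)) * ?x)"
    using ratio_rec[of n] by simp
  finally show ?thesis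
    using a_Suc_pos[of n] a_Suc_pos[of "Suc n"] by simp
qed

lemma sign_condition_step:
  assumes "B > 0" "C < 0" "B\<^sup>2 \<le> A * C" and sign: "B + C * ratio n \<le> 0"
  shows "B + C * ratio (Suc n) \<le> 0"
proof -
  define t where "t = - B / C"
  have t_pos: "t > 0" and Ct: "C * t = - B"
    using assms(1,2) by (simp_all add: t_def divide_pos_neg)
  have le_iff_t: "B + C * x \<le> 0 \<longleftrightarrow> t \<le> x" for x
  proof -
    have "B + C * x = C * (x - t)"
      using Ct by (simp add: algebra_simps)
    then show ?thesis
      using assms(2) by (simp add: mult_le_0_iff)
  qed
  let ?m = "Suc n"
  have "C\<^sup>2 * (a ?m * t\<^sup>2 - b ?m * t + c ?m)
      = a ?m * (C * t)\<^sup>2 - b ?m * (C * t) * C + c ?m * C\<^sup>2"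
    by (simp add: power2_eq_square algebra_simps)
  also have "\<dots> = a ?m * (B\<^sup>2 - A * C) + C * (a ?m * A + b ?m * B + c ?m * C)"
    unfolding Ct by (simp add: power2_eq_square algebra_simps)
  also have "\<dots> = a ?m * (B\<^sup>2 - A * C)"
    by (simp add: coeffs_orthogonal_cross)
  also have "\<dots> \<le> 0"
    using a_Suc_pos[of n] assms(3) by (simp add: mult_nonneg_nonpos)
  finally have quadratic: "a ?m * t\<^sup>2 - b ?m * t + c ?m \<le> 0"
    using assms(2) by (simp add: mult_le_0_iff)
  have "b ?m - c ?m / t - a ?m * t = - (a ?m * t\<^sup>2 - b ?m * t + c ?m) / t"
    using t_pos by (simp add: field_simps power2_eq_square)
  also have "\<dots> \<ge> 0"
    using quadratic t_pos by simp
  finally have "a ?m * t \<le> b ?m - c ?m / t"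
    by simp
  also have "\<dots> \<le> b ?m - c ?m / ratio n"
    using sign le_iff_t t_pos c_Suc_pos by (simp add: frac_le less_imp_le)
  also have "\<dots> = a ?m * ratio ?m"
    by (simp add: ratio_rec)
  finally have "t \<le> ratio ?m"
    using a_Suc_pos by simp
  then show ?thesis
    using le_iff_t by simp
qed

lemma decseq_ratio:
  assumes start: "ratio 1 \<le> ratio 0"
    and sign: "\<And>n. ratio n \<le> ratio 0 \<Longrightarrow> B + C * ratio n \<le> 0"
  shows "decseq ratio"
proof -
  have "ratio (Suc n) \<le> ratio n \<and> ratio n \<le> ratio 0" for n
  proof (induction n)
    case 0
    then show ?case using start by simp
  next
    case (Suc n)
    then show ?case
      using ratio_step_decreasing[of n] sign[of n] by simp
  qed
  then show ?thesis
    by (simp add: decseq_Suc_iff)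
qed

lemma log_concave_if_sign_condition:
  assumes "z 0 * z 2 \<le> (z 1)\<^sup>2"
    and "\<And>n. ratio n \<le> ratio 0 \<Longrightarrow> B + C * ratio n \<le> 0"
  shows "log_concave z"
proof -
  have "ratio 1 \<le> ratio 0"
    using assms(1) log_concave_step_iff_ratio_le[of z 0, OF pos]
    by (simp add: ratio_def numeral_2_eq_2)
  then have "decseq ratio"
    using assms(2) by (rule decseq_ratio)
  then show ?thesis
    using log_concave_iff_decseq_ratio[OF pos] by (simp add: ratio_def[abs_def])
qed

lemma sign_condition_0_iff: "B + C * ratio 0 \<le> 0 \<longleftrightarrow> z 0 * B + z 1 * C \<le> 0"
  using pos[of 0] by (simp add: ratio_def field_simps)

theorem log_concave_if_B_C_nonpos:
  assumes "z 0 * z 2 \<le> (z 1)\<^sup>2" "B \<le> 0" "C \<le> 0"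
  shows "log_concave z"
  using assms ratio_pos
  by (intro log_concave_if_sign_condition) (auto intro: add_nonpos_nonpos mult_nonpos_nonneg less_imp_le)

theorem log_concave_if_C_pos:
  assumes "z 0 * z 2 \<le> (z 1)\<^sup>2" "C > 0" "z 0 * B + z 1 * C \<le> 0"
  shows "log_concave z"
proof (rule log_concave_if_sign_condition)
  fix n
  assume "ratio n \<le> ratio 0"
  then have "B + C * ratio n \<le> B + C * ratio 0"
    using assms(2) by simp
  also have "\<dots> \<le> 0"
    using assms(3) sign_condition_0_iff by simp
  finally show "B + C * ratio n \<le> 0" .
qed (fact assms(1))

theorem log_concave_if_C_neg:
  assumes "z 0 * z 2 \<le> (z 1)\<^sup>2" "B > 0" "C < 0" "B\<^sup>2 \<le> A * C" "z 0 * B + z 1 * C \<le> 0"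
  shows "log_concave z"
proof (rule log_concave_if_sign_condition)
  fix n
  show "B + C * ratio n \<le> 0"
  proof (induction n)
    case 0
    then show ?case using assms(5) sign_condition_0_iff by simp
  next
    case (Suc n)
    then show ?case using sign_condition_step assms(2-4) by blast
  qed
qed (fact assms(1))

end

theorem theorem3p11:
  fixes z :: "nat \<Rightarrow> real"
    and \<alpha>1 \<alpha>0 \<beta>1 \<beta>0 \<gamma>1 \<gamma>0 A B C :: real
  assumes pos: "\<And>n. z n > 0"
    and rec: "\<And>n. n \<ge> 1 \<Longrightarrow>
      (\<alpha>1 * real n + \<alpha>0) * z (n + 1) = (\<beta>1 * real n + \<beta>0) * z n - (\<gamma>1 * real n + \<gamma>0) * z (n - 1)"
    and apos: "\<And>n. n \<ge> 1 \<Longrightarrow> \<alpha>1 * real n + \<alpha>0 > 0"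
    and bpos: "\<And>n. n \<ge> 1 \<Longrightarrow> \<beta>1 * real n + \<beta>0 > 0"
    and cpos: "\<And>n. n \<ge> 1 \<Longrightarrow> \<gamma>1 * real n + \<gamma>0 > 0"
    and A_def: "A = \<beta>0 * \<gamma>1 - \<beta>1 * \<gamma>0"
    and B_def: "B = \<gamma>0 * \<alpha>1 - \<gamma>1 * \<alpha>0"
    and C_def: "C = \<alpha>0 * \<beta>1 - \<alpha>1 * \<beta>0"
    and init: "z 0 * z 2 \<le> (z 1)\<^sup>2"
    and cases: "(B \<le> 0 \<and> C \<le> 0)
      \<or> (B < 0 \<and> C > 0 \<and> A * C \<le> B\<^sup>2 \<and> z 0 * B + z 1 * C \<le> 0)
      \<or> (B > 0 \<and> C < 0 \<and> A * C \<ge> B\<^sup>2 \<and> z 0 * B + z 1 * C \<le> 0)"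
  shows "log_concave z"
proof -
  interpret R: linear_three_term_recurrence z \<alpha>1 \<alpha>0 \<beta>1 \<beta>0 \<gamma>1 \<gamma>0
    by unfold_locales (fact pos rec apos cpos)+
  have coeffs: "R.A = A" "R.B = B" "R.C = C"
    by (simp_all add: R.A_def R.B_def R.C_def A_def B_def C_def)
  \<comment> \<open>\<open>bpos\<close> is implied by the recurrence, and case (ii) does not need \<open>A C \<le> B\<^sup>2\<close>.\<close>
  from cases show ?thesis
  proof (elim disjE conjE)
    assume "B \<le> 0" "C \<le> 0"
    then show ?thesis using R.log_concave_if_B_C_nonpos init coeffs by simp
  next
    assume "C > 0" "z 0 * B + z 1 * C \<le> 0"
    then show ?thesis using R.log_concave_if_C_pos init coeffs by simp
  next
    assume "B > 0" "C < 0" "A * C \<ge> B\<^sup>2" "z 0 * B + z 1 * C \<le> 0"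
    then show ?thesis using R.log_concave_if_C_neg init coeffs by simp
  qed
qed

end
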